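(* For every $\gamma_0\in[0,1]$ there exist a financial system $S$ in the base model (all contracts of the same priority) and banks $u\neq v$ with a debt contract from $u$ to $v$ of weight $c>0$ such that, denoting for $\gamma\in[0,1]$ by $S_\gamma$ the system obtained from $S$ by replacing the weight $c$ of this debt with $\gamma c$ (everything else unchanged): the system $S_{\gamma_0}$ has exactly one solution $r^*$, and for every $\gamma\in[0,1]\setminus\{\gamma_0\}$ and every solution $r$ of $S_\gamma$, the payoff of $v$ in $S_\gamma$ at $r$ is strictly smaller than the payoff of $v$ in $S_{\gamma_0}$ at $r^*$.
   Context: A financial system with payment priorities consists of: a finite set $V$ of banks; external assets $e_v\ge 0$ for each $v\in V$; a number $P\ge 1$ of priority levels; and a finite set of contracts, each of which is either a debt contract from a debtor $u$ to a creditor $v\neq u$ with weight $c>0$, or a credit default swap (CDS) from a debtor $u$ to a creditor $v\neq u$ in reference to a bank $w\notin\{u,v\}$ (the reference entity) with weight $c>0$. Every contract has a priority in $\{1,\dots,P\}$ (1 is the highest priority). It is assumed that every bank that is the reference entity of some CDS is the debtor of at least one debt contract of positive weight. Given a recovery rate vector $r\in[0,1]^V$: the liability of a contract $k$ is $l_k(r)=c$ if $k$ is a debt of weight $c$, and $l_k(r)=c\,(1-r_w)$ if $k$ is a CDS of weight $c$ in reference to $w$. For a bank $v$, $l_v(r)$ is the sum of the liabilities of the contracts with debtor $v$; $l_v^{(\rho)}(r)$ is the sum of the liabilities of contracts with debtor $v$ and priority $\rho$; and $l_v^{(\le\rho)}(r)=\sum_{i=1}^{\rho}l_v^{(i)}(r)$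 (with $l_v^{(\le 0)}=0$). The payment on a contract $k$ with debtor $v$ and priority $\rho$ is $p_k(r)=l_k(r)\cdot\min\{1,\max\{0,(r_v l_v(r)-l_v^{(\le\rho-1)}(r))/l_v^{(\rho)}(r)\}\}$ (and $p_k(r)=0$ if $l_v^{(\rho)}(r)=0$). The assets of $v$ are $a_v(r)=e_v+\sum_k p_k(r)$, summing over contracts $k$ with creditor $v$. A vector $r\in[0,1]^V$ is a solution (clearing vector) if for every $v\in V$: $r_v=1$ when $a_v(r)\ge l_v(r)$, and $r_v=a_v(r)/l_v(r)$ when $a_v(r)<l_v(r)$. The payoff of $v$ is $q_v(r)=\max\{a_v(r)-l_v(r),0\}$. When $P=1$, payments reduce to $p_k(r)=r_v\,l_k(r)$ (principle of proportionality); this is called the base model. A debt of weight $0$ is understood as no contract. *)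

theory Defs
  imports Main "HOL.Real"
begin

text \<open>Banks are labelled by natural numbers; a financial system has a finite
set of banks, external assets, a number of priority levels and a finite list
of contracts (a list, so that parallel contracts with identical data are allowed).\<close>

datatype contract =
    Debt nat nat real nat         \<comment> \<open>debtor, creditor, weight, priority\<close>
  | CDS nat nat nat real nat      \<comment> \<open>debtor, creditor, reference entity, weight, priority\<close>

fun debtor :: "contract \<Rightarrow> nat" where
  "debtor (Debt u v c p) = u" | "debtor (CDS u v w c p) = u"
fun creditor :: "contract \<Rightarrow> nat" where
  "creditor (Debt u v c p) = v" | "creditor (CDS u v w c p) = v"
fun weight :: "contract \<Rightarrow> real" where
  "weight (Debt u v c p) = c" | "weight (CDS u v w c p) = c"
fun prio :: "contract \<Rightarrow> nat" where
  "prio (Debt u v c p) = p" | "prio (CDS u v w c p) = p"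

record fsys =
  banks :: "nat set"
  ext :: "nat \<Rightarrow> real"
  nprios :: nat
  contracts :: "contract list"

definition wf_contract :: "fsys \<Rightarrow> contract \<Rightarrow> bool" where
  "wf_contract S k \<longleftrightarrow>
     debtor k \<in> banks S \<and> creditor k \<in> banks S \<and> debtor k \<noteq> creditor k \<and>
     weight k > 0 \<and> prio k \<in> {1..nprios S} \<and>
     (case k of Debt u v c p \<Rightarrow> True
      | CDS u v w c p \<Rightarrow> w \<in> banks S \<and> w \<noteq> u \<and> w \<noteq> v \<and>
           (\<exists>k'\<in>set (contracts S). \<exists>v' c' p'. k' = Debt w v' c' p' \<and> c' > 0))"

definition wf_fsys :: "fsys \<Rightarrow> bool" where
  "wf_fsys S \<longleftrightarrow> finite (banks S) \<and> (\<forall>v\<in>banks S. ext S v \<ge> 0) \<and> nprios S \<ge> 1 \<and>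
     (\<forall>k\<in>set (contracts S). wf_contract S k)"

fun liab :: "(nat \<Rightarrow> real) \<Rightarrow> contract \<Rightarrow> real" where
  "liab r (Debt u v c p) = c"
| "liab r (CDS u v w c p) = c * (1 - r w)"

definition liab_bank :: "fsys \<Rightarrow> (nat \<Rightarrow> real) \<Rightarrow> nat \<Rightarrow> real" where
  "liab_bank S r v = (\<Sum>k\<leftarrow>contracts S. if debtor k = v then liab r k else 0)"

definition liab_prio :: "fsys \<Rightarrow> (nat \<Rightarrow> real) \<Rightarrow> nat \<Rightarrow> nat \<Rightarrow> real" where
  "liab_prio S r v \<rho> = (\<Sum>k\<leftarrow>contracts S. if debtor k = v \<and> prio k = \<rho> then liab r k else 0)"

definition liab_upto :: "fsys \<Rightarrow> (nat \<Rightarrow> real) \<Rightarrow> nat \<Rightarrow> nat \<Rightarrow> real" where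
  "liab_upto S r v \<rho> = (\<Sum>i=1..\<rho>. liab_prio S r v i)"

definition pay :: "fsys \<Rightarrow> (nat \<Rightarrow> real) \<Rightarrow> contract \<Rightarrow> real" where
  "pay S r k = (let v = debtor k; \<rho> = prio k; L = liab_prio S r v \<rho> in
     if L = 0 then 0
     else liab r k * min 1 (max 0 ((r v * liab_bank S r v - liab_upto S r v (\<rho> - 1)) / L)))"

definition assets :: "fsys \<Rightarrow> (nat \<Rightarrow> real) \<Rightarrow> nat \<Rightarrow> real" where
  "assets S r v = ext S v + (\<Sum>k\<leftarrow>contracts S. if creditor k = v then pay S r k else 0)"

text \<open>Clearing vector; only the values on the bank set matter.\<close>
definition is_solution :: "fsys \<Rightarrow> (nat \<Rightarrow> real) \<Rightarrow> bool" where
  "is_solution S r \<longleftrightarrow> (\<forall>v\<in>banks S. 0 \<le> r v \<and> r v \<le> 1 \<and>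
      (assets S r v \<ge> liab_bank S r v \<longrightarrow> r v = 1) \<and>
      (assets S r v < liab_bank S r v \<longrightarrow> r v = assets S r v / liab_bank S r v))"

definition payoff :: "fsys \<Rightarrow> (nat \<Rightarrow> real) \<Rightarrow> nat \<Rightarrow> real" where
  "payoff S r v = max (assets S r v - liab_bank S r v) 0"

text \<open>Replace the weight c of the i-th contract (a debt) by \<gamma> c.
A debt of weight 0 has liability 0 and hence acts as no contract.\<close>
fun scale_contract :: "real \<Rightarrow> contract \<Rightarrow> contract" where
  "scale_contract g (Debt u v c p) = Debt u v (g * c) p"
| "scale_contract g k = k"

definition scale_debt :: "fsys \<Rightarrow> nat \<Rightarrow> real \<Rightarrow> fsys" where
  "scale_debt S i g = S\<lparr>contracts := (contracts S)[i := scale_contract g (contracts S ! i)]\<rparr>"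

end

theory Submission
  imports Defs
begin

text \<open>Bank 0 holds external assets \<open>a + 1\<close> and owes a debt of weight \<open>c\<close> to bank 1 and
one of weight 1 to bank 2; bank 1 holds external assets 2 and has sold bank 2 a CDS of
weight 2 on bank 0. Bank 0 pays in full iff \<open>c \<le> a\<close>, otherwise at recovery rate
\<open>(a + 1)/(c + 1)\<close>, and bank 1 ends up with payoff \<open>(c + 2) r\<^sub>0\<close>: it gains \<open>c r\<^sub>0\<close> from the
debt and loses \<open>2 (1 - r\<^sub>0)\<close> on the CDS. This payoff increases with \<open>c\<close> on \<open>[0, a]\<close> and
strictly decreases for \<open>c > a\<close>, so it has a strict global maximum at \<open>c = a\<close>, where
the unique clearing vector is the all-ones vector.\<close>

lemma solution_solvent_recovery:
  "is_solution S r \<Longrightarrow> v \<in> banks S \<Longrightarrow> liab_bank S r v \<le> assets S r v \<Longrightarrow> r v = 1"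
  by (simp add: is_solution_def)

definition example_system :: "real \<Rightarrow> real \<Rightarrow> fsys" where
  "example_system a c = \<lparr>banks = {0, 1, 2},
     ext = (\<lambda>w. if w = 0 then a + 1 else if w = 1 then 2 else 0),
     nprios = 1, contracts = [Debt 0 1 c 1, Debt 0 2 1 1, CDS 1 2 0 2 1]\<rparr>"

lemma wf_example_system: "0 \<le> a \<Longrightarrow> 0 < c \<Longrightarrow> wf_fsys (example_system a c)"
  by (auto simp: wf_fsys_def example_system_def wf_contract_def)

lemma scale_debt_example_system:
  "scale_debt (example_system a c) 0 g = example_system a (g * c)"
  by (simp add: scale_debt_def example_system_def)

lemma banks_example_system: "banks (example_system a c) = {0, 1, 2}"
  by (simp add: example_system_def)

lemma liab_bank_example_system:
  "liab_bank (example_system a c) r 0 = c + 1"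
  "liab_bank (example_system a c) r 1 = 2 * (1 - r 0)"
  "liab_bank (example_system a c) r 2 = 0"
  by (simp_all add: example_system_def liab_bank_def)

lemma assets_example_system_0: "assets (example_system a c) r 0 = a + 1"
  by (simp add: example_system_def assets_def)

lemma assets_example_system_1:
  assumes "0 \<le> c" "0 \<le> r 0" "r 0 \<le> 1"
  shows "assets (example_system a c) r 1 = 2 + c * r 0"
proof -
  have "(r 0 * (c + 1)) / (c + 1) = r 0" using assms by simp
  then show ?thesis using assms
    by (simp add: example_system_def assets_def pay_def liab_prio_def liab_upto_def
        liab_bank_def Let_def)
qed

lemma assets_example_system_2_nonneg:
  assumes "0 \<le> c" "0 \<le> r 0" "r 0 \<le> 1"
  shows "0 \<le> assets (example_system a c) r 2"
proof -
  have "0 \<le> min 1 (max 0 x)" for x :: real by simp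
  with assms show ?thesis
    by (simp add: example_system_def assets_def pay_def liab_prio_def liab_upto_def
        liab_bank_def Let_def)
qed

lemma recovery_example_system:
  assumes "0 \<le> c" "is_solution (example_system a c) r"
  shows "r 0 = (if c \<le> a then 1 else (a + 1) / (c + 1))"
  using assms unfolding is_solution_def banks_example_system
  by (auto simp: liab_bank_example_system assets_example_system_0)

lemma payoff_example_system:
  assumes "0 \<le> c" "is_solution (example_system a c) r"
  shows "payoff (example_system a c) r 1 = (c + 2) * r 0"
proof -
  have r0: "0 \<le> r 0" "r 0 \<le> 1"
    using assms(2) by (auto simp: is_solution_def banks_example_system)
  have "payoff (example_system a c) r 1 = max (2 + c * r 0 - 2 * (1 - r 0)) 0"
    unfolding payoff_def liab_bank_example_system assets_example_system_1[of c r, OF assms(1) r0] ..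
  also have "\<dots> = (c + 2) * r 0" using assms(1) r0 by (simp add: algebra_simps)
  finally show ?thesis .
qed

lemma solvent_example_system:
  assumes "0 \<le> c" "c \<le> a" "r 0 = 1" "v \<in> {0, 1, 2}"
  shows "liab_bank (example_system a c) r v \<le> assets (example_system a c) r v"
proof -
  have "liab_bank (example_system a c) r 1 \<le> assets (example_system a c) r 1"
    using assets_example_system_1[of c r a] liab_bank_example_system(2)[of a c r] assms(1,3)
    by simp
  with assms show ?thesis
    by (auto simp: liab_bank_example_system assets_example_system_0
        assets_example_system_2_nonneg)
qed

lemma is_solution_example_system_iff:
  assumes "0 \<le> c" "c \<le> a"
  shows "is_solution (example_system a c) r \<longleftrightarrow> (\<forall>w\<in>{0, 1, 2}. r w = 1)"
proof
  assume sol: "is_solution (example_system a c) r"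
  have "r 0 = 1" using recovery_example_system[OF assms(1) sol] assms(2) by simp
  with sol show "\<forall>w\<in>{0, 1, 2}. r w = 1"
    using solution_solvent_recovery solvent_example_system[OF assms]
    by (simp add: banks_example_system)
next
  assume "\<forall>w\<in>{0, 1, 2}. r w = 1"
  with solvent_example_system[OF assms] show "is_solution (example_system a c) r"
    by (force simp: is_solution_def banks_example_system)
qed

lemma payoff_profile_strict_max:
  fixes a c :: real
  assumes "0 \<le> a" "0 \<le> c" "c \<noteq> a"
  shows "(c + 2) * (if c \<le> a then 1 else (a + 1) / (c + 1)) < a + 2"
proof (cases "c \<le> a")
  case False
  then have "(c + 2) * (a + 1) < (a + 2) * (c + 1)" by (simp add: algebra_simps)
  with False assms(2) show ?thesis by (simp add: divide_simps)
qed (use assms in simp)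

theorem mainTheorem4:
  fixes \<gamma>0 :: real
  assumes "0 \<le> \<gamma>0" and "\<gamma>0 \<le> 1"
  shows "\<exists>S u v c i.
     wf_fsys S \<and> nprios S = 1 \<and>
     i < length (contracts S) \<and> contracts S ! i = Debt u v c 1 \<and> u \<noteq> v \<and> c > 0 \<and>
     (\<exists>rs. is_solution (scale_debt S i \<gamma>0) rs \<and>
        (\<forall>r. is_solution (scale_debt S i \<gamma>0) r \<longrightarrow> (\<forall>w\<in>banks S. r w = rs w)) \<and>
        (\<forall>\<gamma>\<in>{0..1} - {\<gamma>0}. \<forall>r. is_solution (scale_debt S i \<gamma>) r \<longrightarrow>
            payoff (scale_debt S i \<gamma>) r v < payoff (scale_debt S i \<gamma>0) rs v))"
proof (intro exI conjI)
  let ?S = "example_system \<gamma>0 1"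
  have scaled: "scale_debt ?S 0 g = example_system \<gamma>0 g" for g
    using scale_debt_example_system[of \<gamma>0 1 g] by simp
  have sol_iff: "is_solution (scale_debt ?S 0 \<gamma>0) r \<longleftrightarrow> (\<forall>w\<in>banks ?S. r w = 1)" for r
    using is_solution_example_system_iff[OF assms(1) order_refl]
    by (simp add: scaled banks_example_system)
  show "wf_fsys ?S" using assms(1) by (simp add: wf_example_system)
  show "nprios ?S = 1" "0 < length (contracts ?S)" "contracts ?S ! 0 = Debt 0 1 1 1"
    "(0::nat) \<noteq> 1" "(0::real) < 1" by (simp_all add: example_system_def)
  show "is_solution (scale_debt ?S 0 \<gamma>0) (\<lambda>_. 1)" by (simp add: sol_iff)
  show "\<forall>r. is_solution (scale_debt ?S 0 \<gamma>0) r \<longrightarrow> (\<forall>w\<in>banks ?S. r w = 1)"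
    by (simp add: sol_iff)
  have "payoff (scale_debt ?S 0 \<gamma>0) (\<lambda>_. 1) 1 = \<gamma>0 + 2"
    using payoff_example_system[OF assms(1), of \<gamma>0 "\<lambda>_. 1"] sol_iff[of "\<lambda>_. 1"]
    by (simp add: scaled)
  then show "\<forall>\<gamma>\<in>{0..1} - {\<gamma>0}. \<forall>r. is_solution (scale_debt ?S 0 \<gamma>) r \<longrightarrow>
      payoff (scale_debt ?S 0 \<gamma>) r 1 < payoff (scale_debt ?S 0 \<gamma>0) (\<lambda>_. 1) 1"
  proof (intro ballI allI impI)
    fix g r assume g: "g \<in> {0..1} - {\<gamma>0}" and "is_solution (scale_debt ?S 0 g) r"
    then have sol: "is_solution (example_system \<gamma>0 g) r" by (simp add: scaled)
    from g have "0 \<le> g" "g \<noteq> \<gamma>0" by auto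
    then have "payoff (example_system \<gamma>0 g) r 1 < \<gamma>0 + 2"
      using payoff_example_system[OF _ sol] recovery_example_system[OF _ sol]
        payoff_profile_strict_max[OF assms(1)] by simp
    with \<open>payoff (scale_debt ?S 0 \<gamma>0) (\<lambda>_. 1) 1 = \<gamma>0 + 2\<close>
    show "payoff (scale_debt ?S 0 g) r 1 < payoff (scale_debt ?S 0 \<gamma>0) (\<lambda>_. 1) 1"
      by (simp add: scaled)
  qed
qed

end
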